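(* There exist a compact metric space $X$ and a homeomorphism $f\colon X\to X$ such that $\mathrm{SProx}(f)=\Delta_X$ but $\mathrm{Prox}(f)\ne\Delta_X$.
   Context: $\Delta_X=\{(x,x):x\in X\}$. $\mathrm{Prox}(f)=\{(x,y):\liminf_{n\to\infty} d(f^nx,f^ny)=0\}$; $\mathrm{SProx}(f)=\{(x,y):\{n\in\mathbb N:d(f^nx,f^ny)<\varepsilon\}$ is syndetic for every $\varepsilon>0\}$, where a subset of $\mathbb N$ is syndetic if it meets every subset of $\mathbb N$ containing arbitrarily long runs of consecutive integers. *)

theory Defs
  imports "HOL-Analysis.Analysis" "HOL-Library.Extended_Real"
begin

definition diag_on :: "'a set \<Rightarrow> ('a \<times> 'a) set" where
  "diag_on X = {(x, x) | x. x \<in> X}"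

definition thick_set :: "nat set \<Rightarrow> bool" where
  "thick_set T \<longleftrightarrow> (\<forall>k. \<exists>a. {a..<a + k} \<subseteq> T)"

definition syndetic :: "nat set \<Rightarrow> bool" where
  "syndetic S \<longleftrightarrow> (\<forall>T. thick_set T \<longrightarrow> S \<inter> T \<noteq> {})"

definition Prox :: "'a set \<Rightarrow> ('a \<Rightarrow> 'a \<Rightarrow> real) \<Rightarrow> ('a \<Rightarrow> 'a) \<Rightarrow> ('a \<times> 'a) set" where
  "Prox X d f = {(x, y). x \<in> X \<and> y \<in> X \<and>
      liminf (\<lambda>n. ereal (d ((f ^^ n) x) ((f ^^ n) y))) = 0}"

definition SProx :: "'a set \<Rightarrow> ('a \<Rightarrow> 'a \<Rightarrow> real) \<Rightarrow> ('a \<Rightarrow> 'a) \<Rightarrow> ('a \<times> 'a) set" where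
  "SProx X d f = {(x, y). x \<in> X \<and> y \<in> X \<and>
      (\<forall>\<epsilon>>0. syndetic {n. d ((f ^^ n) x) ((f ^^ n) y) < \<epsilon>})}"

end

theory Submission
  imports Defs "HOL-Real_Asymp.Real_Asymp"
begin

(* X is the unit circle S together with one two-sided orbit
   of points x_n (n \<in> \<int>) spiralling onto it:
     x_n = (1 + \<tau>(n)) \<cdot> e^{2\<pi>i(n\<alpha> + \<surd>n)},   \<alpha> = \<surd>2,   \<tau>(n) \<rightarrow> 0 as |n| \<rightarrow> \<infinity>,
   and f rotates S by the angle 2\<pi>\<alpha> and shifts the orbit, x_n \<mapsto> x_{n+1}.
   Since \<surd>(n+1) - \<surd>n \<rightarrow> 0, f is continuous at S; the x_n are isolated.
   - On S, f is an isometry, so distinct circle points stay apart.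
   - Distinct orbit points x_{i+n}, x_{j+n} eventually have almost the
     constant angular gap 2\<pi>(j-i)\<alpha> \<notin> 2\<pi>\<int>, so they stay apart.
   - An orbit point and a circle point differ in phase by \<surd>(i+n) + const
     (mod 1), which lies in [1/4,3/4] on arbitrarily long runs of n; so
     their distance is \<ge> 1/2 on a thick set, and they are not syndetically
     proximal.  Together: SProx(f) = \<Delta>.
   - But x_0 and the circle point 1 are proximal: at n = k\<^sup>2 the phases agree. *)


lemma thick_atLeast: "thick_set {N::nat..}"
  unfolding thick_set_def by auto

lemma syndetic_UNIV: "syndetic UNIV"
  unfolding syndetic_def thick_set_def
proof (intro allI impI)
  fix T :: "nat set" assume "\<forall>k. \<exists>a. {a..<a + k} \<subseteq> T"
  then obtain a where "{a..<a + 1} \<subseteq> T" by blast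
  thus "UNIV \<inter> T \<noteq> {}" by auto
qed

lemma not_syndetic_if_apart_on_thick:
  assumes "thick_set T" and "\<forall>n\<in>T. e \<le> (g n :: real)"
  shows "\<not> syndetic {n. g n < e}"
proof -
  have "{n. g n < e} \<inter> T = {}" using assms(2) by force
  thus ?thesis using assms(1) unfolding syndetic_def by blast
qed

lemma SProx_eq_diag_onI:
  assumes M: "Metric_space X d" and fX: "f ` X \<subseteq> X"
    and apart: "\<And>p q. p \<in> X \<Longrightarrow> q \<in> X \<Longrightarrow> p \<noteq> q \<Longrightarrow>
                  \<exists>e>0. \<exists>T. thick_set T \<and> (\<forall>n\<in>T. e \<le> d ((f^^n) p) ((f^^n) q))"
  shows "SProx X d f = diag_on X"
proof
  show "diag_on X \<subseteq> SProx X d f"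
  proof
    fix z assume "z \<in> diag_on X"
    then obtain x where z: "z = (x, x)" and x: "x \<in> X" by (auto simp: diag_on_def)
    have "(f^^n) x \<in> X" for n by (induction n) (use x fX in auto)
    hence "d ((f^^n) x) ((f^^n) x) = 0" for n using Metric_space.mdist_zero[OF M] by blast
    hence "{n. d ((f^^n) x) ((f^^n) x) < e} = UNIV" if "0 < e" for e using that by simp
    thus "z \<in> SProx X d f" using x syndetic_UNIV by (simp add: SProx_def z)
  qed
  show "SProx X d f \<subseteq> diag_on X"
  proof
    fix z assume "z \<in> SProx X d f"
    then obtain p q where z: "z = (p, q)" and pq: "p \<in> X" "q \<in> X"
      and synd: "\<forall>e>0. syndetic {n. d ((f^^n) p) ((f^^n) q) < e}" by (auto simp: SProx_def)
    have "p = q"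
    proof (rule ccontr)
      assume "p \<noteq> q"
      then obtain e T where "0 < e" "thick_set T" "\<forall>n\<in>T. e \<le> d ((f^^n) p) ((f^^n) q)"
        using apart pq by blast
      hence "\<not> syndetic {n. d ((f^^n) p) ((f^^n) q) < e}" by (intro not_syndetic_if_apart_on_thick)
      thus False using synd \<open>0 < e\<close> by blast
    qed
    thus "z \<in> diag_on X" using z pq by (simp add: diag_on_def)
  qed
qed

(* Proximality is witnessed by a sequence of times along which the
   distance tends to 0 (the liminf is then 0, distances being \<ge> 0). *)
lemma ProxI_subseq:
  assumes M: "Metric_space X d" and "x \<in> X" "y \<in> X" and r: "strict_mono r"
    and lim: "(\<lambda>k. d ((f^^r k) x) ((f^^r k) y)) \<longlonglongrightarrow> 0"
  shows "(x, y) \<in> Prox X d f"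
proof -
  define u where "u n = ereal (d ((f^^n) x) ((f^^n) y))" for n
  have "(u \<circ> r) \<longlonglongrightarrow> ereal 0" using lim unfolding u_def comp_def by (rule tendsto_ereal)
  hence "liminf (u \<circ> r) = 0" by (simp add: lim_imp_Liminf zero_ereal_def)
  hence "liminf u \<le> 0" using liminf_subseq_mono[OF r, of u] by simp
  moreover have "0 \<le> liminf u"
  proof -
    have "0 \<le> u n" for n by (simp add: u_def Metric_space.nonneg[OF M])
    hence "y < u n" if "y < 0" for y n using that order.strict_trans2 by blast
    thus ?thesis unfolding le_Liminf_iff by (simp add: always_eventually)
  qed
  ultimately have "liminf u = 0" by simp
  thus ?thesis using assms(2,3) unfolding Prox_def u_def by simp
qed

lemma Metric_space_pullback:
  assumes "inj_on E A"
  shows "Metric_space A (\<lambda>x y. dist (E x) (E y))"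
proof
  fix x y z
  show "0 \<le> dist (E x) (E y)" "dist (E x) (E y) = dist (E y) (E x)"
    by (simp_all add: dist_commute)
  show "x \<in> A \<Longrightarrow> y \<in> A \<Longrightarrow> dist (E x) (E y) = 0 \<longleftrightarrow> x = y"
    using assms by (auto simp: inj_on_def)
  show "dist (E x) (E z) \<le> dist (E x) (E y) + dist (E y) (E z)"
    by (rule dist_triangle)
qed

lemma compact_space_pullback:
  assumes inj: "inj_on E A" and cpt: "compact (E ` A)"
  shows "compact_space (Metric_space.mtopology A (\<lambda>x y. dist (E x) (E y)))"
proof -
  interpret M: Metric_space A "\<lambda>x y. dist (E x) (E y)" by (rule Metric_space_pullback[OF inj])
  show ?thesis unfolding M.compact_space_sequentially
  proof (intro allI impI)
    fix \<sigma> :: "nat \<Rightarrow> 'a" assume "range \<sigma> \<subseteq> A"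
    hence "\<forall>n. (E \<circ> \<sigma>) n \<in> E ` A" by auto
    then obtain l r where l: "l \<in> E ` A" and r: "strict_mono r" and lim: "(E \<circ> \<sigma> \<circ> r) \<longlonglongrightarrow> l"
      using compact_imp_seq_compact[OF cpt] unfolding seq_compact_def by blast
    obtain q where q: "q \<in> A" "l = E q" using l by auto
    have "limitin M.mtopology (\<sigma> \<circ> r) q sequentially"
      unfolding M.limitin_metric
    proof (intro conjI allI impI)
      fix e :: real assume "0 < e"
      hence "\<forall>\<^sub>F n in sequentially. dist ((E \<circ> \<sigma> \<circ> r) n) l < e" using lim by (simp add: tendsto_iff)
      thus "\<forall>\<^sub>F n in sequentially. (\<sigma> \<circ> r) n \<in> A \<and> dist (E ((\<sigma> \<circ> r) n)) (E q) < e"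
        by (rule eventually_mono) (use \<open>range \<sigma> \<subseteq> A\<close> q in auto)
    qed (use q in simp)
    thus "\<exists>l r. l \<in> A \<and> strict_mono r \<and> limitin M.mtopology (\<sigma> \<circ> r) l sequentially"
      using q r by blast
  qed
qed

lemma cis_2pi_add_int: "cis (2*pi*(x + of_int k)) = cis (2*pi*x)"
proof -
  have "cis (2*pi*(x + of_int k)) = cis (2*pi*x) * cis (2*pi*(of_int k))"
    by (metis cis_mult distrib_left)
  also have "cis (2*pi*(of_int k)) = 1" by (rule cis_multiple_2pi) simp
  finally show ?thesis by simp
qed

lemma cis_2pi_frac: "cis (2*pi*frac t) = cis (2*pi*t)"
  using cis_2pi_add_int[of "frac t" "\<lfloor>t\<rfloor>"] by (simp add: frac_def)

lemma norm_cis_diff: "cmod (cis a - cis b) = cmod (cis (a - b) - 1)"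
proof -
  have "cis a - cis b = cis b * (cis (a - b) - 1)"
    by (simp add: right_diff_distrib cis_mult)
  thus ?thesis by (simp add: norm_mult)
qed

lemma norm_cis_minus_one_sq: "(cmod (cis u - 1))\<^sup>2 = 2 - 2 * cos u"
proof -
  have "(cmod (cis u - 1))\<^sup>2 = (cos u - 1)\<^sup>2 + (sin u)\<^sup>2" by (simp add: cmod_power2)
  also have "\<dots> = 2 - 2 * cos u" using sin_cos_squared_add[of u] by (simp add: power2_diff)
  finally show ?thesis .
qed

lemma norm_cis_minus_one_le: "cmod (cis u - 1) \<le> \<bar>u\<bar>"
proof -
  have "(cmod (cis u - 1))\<^sup>2 = 4 * (sin (u/2))\<^sup>2"
    using norm_cis_minus_one_sq[of u] cos_double_sin[of "u/2"] by simp
  also have "\<dots> \<le> 4 * (u/2)\<^sup>2"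
    using power_mono[OF abs_sin_x_le_abs_x[of "u/2"], of 2] by (simp add: power_divide)
  also have "\<dots> = \<bar>u\<bar>\<^sup>2" by (simp add: power2_eq_square)
  finally show ?thesis by (rule power2_le_imp_le) simp
qed

lemma norm_cis_shift_ge: "cmod (cis X - 1) - \<bar>Y\<bar> \<le> cmod (cis (X + Y) - 1)"
proof -
  have "cmod (cis X - 1) \<le> cmod (cis X - cis (X + Y)) + cmod (cis (X + Y) - 1)"
    by (rule norm_diff_triangle_le[where y="cis (X + Y)"]) simp_all
  moreover have "cmod (cis X - cis (X + Y)) \<le> \<bar>Y\<bar>"
    using norm_cis_minus_one_le[of "-Y"] by (simp add: norm_cis_diff)
  ultimately show ?thesis by linarith
qed

lemma one_le_norm_cis_frac:
  assumes "1/4 \<le> frac t" "frac t \<le> 3/4"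
  shows "1 \<le> cmod (cis (2*pi*t) - 1)"
proof -
  have "pi/2 \<le> 2*pi*frac t" "2*pi*frac t \<le> 3*pi/2"
    using mult_left_mono[OF assms(1), of "2*pi"] mult_left_mono[OF assms(2), of "2*pi"] by simp_all
  hence "0 \<le> cos (2*pi*frac t - pi)" by (intro cos_ge_zero) linarith+
  hence "cos (2*pi*frac t) \<le> 0" by (simp add: cos_diff)
  hence "1\<^sup>2 \<le> (cmod (cis (2*pi*frac t) - 1))\<^sup>2" by (simp add: norm_cis_minus_one_sq)
  hence "1 \<le> cmod (cis (2*pi*frac t) - 1)" by (rule power2_le_imp_le) simp
  thus ?thesis by (simp add: cis_2pi_frac)
qed

lemma cis_2pi_eq_imp_Ints:
  assumes "cis (2*pi*a) = cis (2*pi*b)"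
  shows "a - b \<in> \<int>"
proof -
  have "cmod (cis (2*pi*a - 2*pi*b) - 1) = 0" using assms norm_cis_diff[of "2*pi*a" "2*pi*b"] by simp
  hence "cos (2*pi*a - 2*pi*b) = 1" using norm_cis_minus_one_sq[of "2*pi*a - 2*pi*b"] by simp
  then obtain k :: int where "2*pi*a - 2*pi*b = of_int k * 2 * pi" using cos_one_2pi_int by blast
  hence "2*pi*(a - b - of_int k) = 0" by (simp add: algebra_simps)
  hence "a - b = of_int k" by simp
  thus ?thesis by simp
qed

lemma nat_sq_eq_double_sq: "(k::nat)\<^sup>2 = 2 * m\<^sup>2 \<Longrightarrow> m = 0"
proof (induction m arbitrary: k rule: less_induct)
  case (less m)
  show ?case
  proof (rule ccontr)
    assume m0: "m \<noteq> 0"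
    have "even k" using less.prems by (metis dvd_triv_left even_power pos2)
    then obtain k' where k': "k = 2 * k'" by blast
    hence "m\<^sup>2 = 2 * k'\<^sup>2" using less.prems by (simp add: power2_eq_square)
    hence "even m" by (metis dvd_triv_left even_power pos2)
    then obtain m' where m': "m = 2 * m'" by blast
    hence "k'\<^sup>2 = 2 * m'\<^sup>2" using \<open>m\<^sup>2 = 2 * k'\<^sup>2\<close> by (simp add: power2_eq_square)
    moreover have "m' < m" using m' m0 by simp
    ultimately have "m' = 0" using less.IH by blast
    thus False using m' m0 by simp
  qed
qed

lemma int_mult_sqrt2_Ints: "of_int m * sqrt 2 \<in> \<int> \<Longrightarrow> m = 0"
proof -
  assume "of_int m * sqrt 2 \<in> \<int>"
  then obtain k :: int where "of_int m * sqrt 2 = of_int k" by (metis Ints_cases)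
  hence "(of_int k :: real)\<^sup>2 = (of_int m * sqrt 2)\<^sup>2" by simp
  also have "\<dots> = of_int (2 * m\<^sup>2)" by (simp add: power_mult_distrib)
  finally have "(of_int k :: real)\<^sup>2 = of_int (2 * m\<^sup>2)" .
  hence km: "k\<^sup>2 = 2 * m\<^sup>2" by (metis of_int_eq_iff of_int_power)
  have "int ((nat \<bar>k\<bar>)\<^sup>2) = k\<^sup>2" "int (2 * (nat \<bar>m\<bar>)\<^sup>2) = 2 * m\<^sup>2" by simp_all
  hence "(nat \<bar>k\<bar>)\<^sup>2 = 2 * (nat \<bar>m\<bar>)\<^sup>2" using km by (metis of_nat_eq_iff)
  hence "nat \<bar>m\<bar> = 0" by (rule nat_sq_eq_double_sq)
  thus "m = 0" by simp
qed

(* \<surd>k (mod 1) stays in [1/4,3/4] along arbitrarily long runs of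
   consecutive k, starting arbitrarily late: \<surd> grows so slowly that an
   interval [v\<^sup>2, v\<^sup>2 + L) with v \<ge> L is mapped into [v, v + 1/2). *)
lemma sqrt_runs_in_band:
  fixes b :: real and M L :: nat
  shows "\<exists>K\<ge>M. \<forall>k\<in>{K..<K+L}. 1/4 \<le> frac (sqrt (real k) - b) \<and> frac (sqrt (real k) - b) \<le> 3/4"
proof -
  define J :: int where "J = \<lceil>real L + real M + 1 + \<bar>b\<bar>\<rceil>"
  define v where "v = of_int J + b + 1/4"
  define K where "K = nat \<lceil>v\<^sup>2\<rceil>"
  have vL: "real L + real M + 1 \<le> v"
    using le_of_int_ceiling[of "real L + real M + 1 + \<bar>b\<bar>"] unfolding v_def J_def by linarith
  hence v1: "1 \<le> v" by linarith
  hence "v \<le> v\<^sup>2" by (simp add: power2_eq_square)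
  have K: "v\<^sup>2 \<le> real K" "real K < v\<^sup>2 + 1"
    unfolding K_def using v1 by (simp_all add: of_nat_nat ceiling_less_iff) linarith
  show ?thesis
  proof (intro exI conjI ballI)
    show "M \<le> K" using K \<open>v \<le> v\<^sup>2\<close> vL by linarith
    fix k assume "k \<in> {K..<K+L}"
    hence k: "v\<^sup>2 \<le> real k" "real k < v\<^sup>2 + real L" using K by auto
    have "sqrt (v\<^sup>2) \<le> sqrt (real k)" using k(1) by (simp only: real_sqrt_le_iff)
    hence lo: "v \<le> sqrt (real k)" using v1 by simp
    have "real k < (v + 1/2)\<^sup>2" using k(2) vL by (simp add: power2_eq_square algebra_simps)
    hence "sqrt (real k) < sqrt ((v + 1/2)\<^sup>2)" by (simp only: real_sqrt_less_iff)
    hence hi: "sqrt (real k) < v + 1/2" using v1 by simp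
    have "frac (sqrt (real k) - b) = sqrt (real k) - b - of_int J"
      unfolding frac_unique_iff using lo hi by (auto simp: v_def)
    thus "1/4 \<le> frac (sqrt (real k) - b)" "frac (sqrt (real k) - b) \<le> 3/4"
      using lo hi by (auto simp: v_def)
  qed
qed

lemma half_pow_sep:
  fixes a b :: nat assumes "a \<noteq> b"
  shows "(1/2::real)^a / 2 \<le> \<bar>(1/2)^a - (1/2)^b\<bar>"
proof (cases "a < b")
  case True
  hence "(1/2::real)^b \<le> (1/2)^a / 2" using power_decreasing[of "a+1" b "1/2::real"] by simp
  moreover have "0 \<le> (1/2::real)^b" by simp
  ultimately show ?thesis by linarith
next
  case False
  hence "(1/2::real)^a \<le> (1/2)^b / 2" using assms power_decreasing[of "b+1" a "1/2::real"] by simp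
  moreover have "0 \<le> (1/2::real)^a" by simp
  ultimately show ?thesis by linarith
qed

definition alpha :: real where "alpha = sqrt 2"

(* Radial offset of the n-th orbit point from the circle: nonzero,
   injective in n, and tending to 0 as |n| \<rightarrow> \<infinity> (outside for n \<ge> 0,
   inside for n < 0). *)
definition offset :: "int \<Rightarrow> real" where
  "offset n = (if 0 \<le> n then (1/2)^nat n else -((1/2)^nat (1 - n)))"

(* The extra phase \<surd>n that makes orbit and circle points drift apart. *)
definition drift :: "int \<Rightarrow> real" where "drift n = sqrt (real (nat n))"

definition orbit_pt :: "int \<Rightarrow> complex" where
  "orbit_pt n = complex_of_real (1 + offset n) * cis (2*pi*(of_int n * alpha + drift n))"

(* The space, coded inside \<real>: t \<in> [-1,0) stands for cis (2\<pi>t) on the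
   circle and e^n stands for orbit_pt n; emb decodes this. *)
definition spiral_space :: "real set" where
  "spiral_space = {-1..<0} \<union> range (\<lambda>n::int. exp (of_int n))"

definition emb :: "real \<Rightarrow> complex" where
  "emb t = (if t < 0 then cis (2*pi*t) else orbit_pt \<lfloor>ln t\<rfloor>)"

definition spiral_dist :: "real \<Rightarrow> real \<Rightarrow> real" where
  "spiral_dist p q = dist (emb p) (emb q)"

definition spiral_map :: "real \<Rightarrow> real" where
  "spiral_map t = (if t < 0 then frac (t + alpha) - 1 else exp 1 * t)"

lemma spiral_space_cases:
  assumes "p \<in> spiral_space"
  obtains "p \<in> {-1..<0}" | n where "p = exp (of_int n)"
  using assms by (auto simp: spiral_space_def)

lemma emb_circle: "t < 0 \<Longrightarrow> emb t = cis (2*pi*t)"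
  by (simp add: emb_def)

lemma emb_orbit: "emb (exp (of_int n)) = orbit_pt n"
  by (simp add: emb_def)

lemma abs_offset: "\<bar>offset n\<bar> = (1/2)^(nat \<bar>n\<bar> + (if 0 \<le> n then 0 else 1))"
proof (cases "0 \<le> n")
  case False
  hence "nat (1 - n) = nat \<bar>n\<bar> + 1" by simp
  thus ?thesis using False by (simp add: offset_def)
qed (simp add: offset_def)

lemma offset_lower: "(1/2)^(nat \<bar>n\<bar> + 1) \<le> \<bar>offset n\<bar>"
  unfolding abs_offset by (intro power_decreasing) auto

lemma offset_upper: "\<bar>offset n\<bar> \<le> (1/2)^(nat \<bar>n\<bar>)"
  unfolding abs_offset by (intro power_decreasing) auto

lemma offset_nonzero: "offset n \<noteq> 0"
  using offset_lower[of n] by (metis abs_zero not_less zero_less_divide_1_iff zero_less_numeral zero_less_power)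

lemma offset_le_half: "n \<noteq> 0 \<Longrightarrow> \<bar>offset n\<bar> \<le> 1/2"
proof -
  assume "n \<noteq> 0"
  hence "(1/2::real)^(nat \<bar>n\<bar>) \<le> (1/2)^1" by (intro power_decreasing) auto
  thus ?thesis using offset_upper[of n] by simp
qed

lemma offset_gt: "-1/2 < offset n"
proof (cases "0 \<le> n")
  case False
  hence "(1/2::real)^nat (1 - n) \<le> (1/2)^2" by (intro power_decreasing) auto
  thus ?thesis using False by (simp add: offset_def power2_eq_square)
next
  case True
  hence "offset n = (1/2)^nat n" by (simp add: offset_def)
  thus ?thesis using zero_less_power[of "1/2::real" "nat n"] by linarith
qed

lemma offset_sep:
  assumes "m \<noteq> n"
  shows "\<bar>offset n\<bar> / 2 \<le> \<bar>offset n - offset m\<bar>"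
proof (cases "0 \<le> n \<longleftrightarrow> 0 \<le> m")
  case same_sign: True
  define a b where "a = nat \<bar>n\<bar> + (if 0 \<le> n then 0 else 1)" and "b = nat \<bar>m\<bar> + (if 0 \<le> m then 0 else 1)"
  have "a \<noteq> b" using assms same_sign by (auto simp: a_def b_def)
  hence "(1/2::real)^a / 2 \<le> \<bar>(1/2)^a - (1/2)^b\<bar>" by (rule half_pow_sep)
  moreover have "\<bar>offset n - offset m\<bar> = \<bar>(1/2)^a - (1/2)^b\<bar>"
  proof (cases "0 \<le> n")
    case True
    thus ?thesis using same_sign by (simp add: offset_def a_def b_def)
  next
    case False
    hence "nat (1 - n) = a" "nat (1 - m) = b" using same_sign by (simp_all add: a_def b_def)
    thus ?thesis using False same_sign by (simp add: offset_def abs_minus_commute)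
  qed
  ultimately show ?thesis by (simp add: abs_offset a_def)
next
  case False
  hence "offset n < 0 \<and> 0 < offset m \<or> 0 < offset n \<and> offset m < 0"
    by (auto simp: offset_def)
  thus ?thesis by auto
qed

lemma offset_small_at_infinity:
  assumes "0 < e"
  shows "\<exists>N::nat. \<forall>n. N \<le> nat \<bar>n\<bar> \<longrightarrow> \<bar>offset n\<bar> < e"
proof -
  obtain N where N: "(1/2::real)^N < e" using real_arch_pow_inv[OF assms, of "1/2"] by auto
  have "\<bar>offset n\<bar> < e" if "N \<le> nat \<bar>n\<bar>" for n
  proof -
    have "(1/2::real)^(nat \<bar>n\<bar>) \<le> (1/2)^N" using that by (intro power_decreasing) auto
    thus ?thesis using offset_upper[of n] N by linarith
  qed
  thus ?thesis by blast
qed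

lemma norm_orbit_pt: "cmod (orbit_pt n) = 1 + offset n"
proof -
  have "cmod (complex_of_real (1 + offset n)) = \<bar>1 + offset n\<bar>" by (rule norm_of_real)
  thus ?thesis using offset_gt[of n] by (simp add: orbit_pt_def norm_mult del: of_real_add)
qed

(* The coding is faithful: circle and orbit points are told apart by
   their modulus, orbit points among themselves by their offsets. *)
lemma inj_on_emb: "inj_on emb spiral_space"
proof (rule inj_onI)
  fix p q assume p: "p \<in> spiral_space" and q: "q \<in> spiral_space" and e: "emb p = emb q"
  have norm_emb: "cmod (emb t) = 1 \<longleftrightarrow> t < 0" if "t \<in> spiral_space" for t
    using that by (cases rule: spiral_space_cases) (auto simp: emb_circle emb_orbit norm_orbit_pt offset_nonzero)
  have same_side: "p < 0 \<longleftrightarrow> q < 0" using norm_emb[OF p] norm_emb[OF q] e by simp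
  show "p = q"
  proof (cases "p < 0")
    case True
    hence "p \<in> {-1..<0}" "q \<in> {-1..<0}" using p q same_side by (auto simp: spiral_space_def)
    moreover obtain k :: int where k: "p - q = of_int k"
      using e cis_2pi_eq_imp_Ints[of p q] True same_side by (auto simp: emb_circle elim!: Ints_cases)
    ultimately have "(-1::real) < of_int k" "of_int k < (1::real)" using k by auto
    hence "k = 0" by simp
    thus ?thesis using k by simp
  next
    case False
    then obtain m n where mn: "p = exp (of_int m)" "q = exp (of_int n)"
      using p q same_side by (auto simp: spiral_space_def)
    hence "1 + offset m = 1 + offset n" using e norm_orbit_pt[of m] norm_orbit_pt[of n] by (simp add: emb_orbit)
    hence "\<bar>offset m - offset n\<bar> = 0" by simp
    hence "m = n" using offset_sep[of n m] offset_nonzero[of m] by (cases "m = n") auto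
    thus ?thesis using mn by simp
  qed
qed

lemma spiral_metric: "Metric_space spiral_space spiral_dist"
  unfolding spiral_dist_def[abs_def] by (rule Metric_space_pullback[OF inj_on_emb])

lemma emb_circle_image: "emb ` {-1..<0} = sphere 0 1"
proof
  show "emb ` {-1..<0} \<subseteq> sphere 0 1" by (auto simp: emb_circle)
  show "sphere 0 1 \<subseteq> emb ` {-1..<0}"
  proof
    fix z :: complex assume "z \<in> sphere 0 1"
    hence "cmod z = 1" by simp
    moreover from this have "z \<noteq> 0" by auto
    ultimately have "cis (Arg z) = z" by (simp add: cis_Arg sgn_div_norm)
    define a where "a = Arg z / (2*pi)"
    have za: "z = cis (2*pi*a)" using \<open>cis (Arg z) = z\<close> by (simp add: a_def)
    have "-pi < Arg z" "Arg z \<le> pi" using Arg_bounded[of z] by auto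
    hence "-1/2 < a" "a \<le> 1/2" using pi_gt_zero by (auto simp: a_def field_simps)
    moreover have "z = emb (frac a - 1)"
      using frac_lt_1[of a] by (simp add: za emb_circle cis_2pi_add_int[of "frac a" "-1", simplified] cis_2pi_frac)
    moreover have "frac a - 1 \<in> {-1..<0}" using frac_lt_1[of a] frac_ge_0[of a] by simp
    ultimately show "z \<in> emb ` {-1..<0}" by blast
  qed
qed

lemma emb_image: "emb ` spiral_space = sphere 0 1 \<union> range orbit_pt"
  unfolding spiral_space_def image_Un emb_circle_image by (auto simp: image_image emb_orbit)

(* The orbit accumulates only on the circle: the closure of the orbit
   adds nothing but circle points. *)
lemma closed_circle_Un_orbit: "closed (sphere 0 1 \<union> range orbit_pt)"
  unfolding closed_sequential_limits
proof (intro allI impI, elim conjE)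
  fix z :: "nat \<Rightarrow> complex" and l
  assume z: "\<forall>k. z k \<in> sphere 0 1 \<union> range orbit_pt" and lim: "z \<longlonglongrightarrow> l"
  show "l \<in> sphere 0 1 \<union> range orbit_pt"
  proof (cases "cmod l = 1")
    case False
    define \<delta> where "\<delta> = \<bar>cmod l - 1\<bar>"
    have "0 < \<delta>" using False by (simp add: \<delta>_def)
    then obtain N where N: "\<forall>n. N \<le> nat \<bar>n\<bar> \<longrightarrow> \<bar>offset n\<bar> < \<delta>/2"
      using offset_small_at_infinity[of "\<delta>/2"] by auto
    define A where "A = orbit_pt ` {-int N..int N}"
    have near: "w \<in> A" if w: "w \<in> sphere 0 1 \<union> range orbit_pt" and wl: "dist w l < \<delta>/2" for w
    proof -
      have tri: "\<bar>cmod w - cmod l\<bar> < \<delta>/2"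
        using norm_triangle_ineq3[of w l] wl by (simp add: dist_norm)
      hence "cmod w \<noteq> 1" by (auto simp: \<delta>_def abs_if split: if_splits)
      then obtain n where n: "w = orbit_pt n" using w by auto
      hence "\<delta>/2 \<le> \<bar>offset n\<bar>" using tri norm_orbit_pt[of n] by (auto simp: \<delta>_def abs_if split: if_splits)
      hence "\<not> N \<le> nat \<bar>n\<bar>" using N by force
      hence "n \<in> {-int N..int N}" by auto
      thus ?thesis using n by (simp add: A_def)
    qed
    have "\<forall>\<^sub>F k in sequentially. z k \<in> A"
      using tendstoD[OF lim, of "\<delta>/2"] \<open>0 < \<delta>\<close> z near by (auto elim: eventually_mono)
    moreover have "closed A" unfolding A_def by (intro finite_imp_closed) simp
    ultimately have "l \<in> A" using lim by (intro Lim_in_closed_set) auto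
    thus ?thesis by (auto simp: A_def)
  qed simp
qed

lemma compact_emb_image: "compact (emb ` spiral_space)"
proof -
  have "cmod (orbit_pt n) \<le> 2" for n
    using offset_upper[of n] norm_orbit_pt[of n] power_le_one[of "1/2::real" "nat \<bar>n\<bar>"] by simp
  hence "sphere 0 1 \<union> range orbit_pt \<subseteq> cball (0::complex) 2" by auto
  hence "bounded (sphere 0 1 \<union> range orbit_pt)" using bounded_cball bounded_subset by blast
  thus ?thesis unfolding emb_image using closed_circle_Un_orbit by (simp add: compact_eq_bounded_closed)
qed

lemma spiral_compact: "compact_space (Metric_space.mtopology spiral_space spiral_dist)"
  unfolding spiral_dist_def[abs_def] by (rule compact_space_pullback[OF inj_on_emb compact_emb_image])

lemma spiral_map_circle:
  assumes "t \<in> {-1..<0}"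
  shows "spiral_map t \<in> {-1..<0}" and "emb (spiral_map t) = cis (2*pi*alpha) * emb t"
proof -
  have f: "spiral_map t = frac (t + alpha) - 1" using assms by (simp add: spiral_map_def)
  show mem: "spiral_map t \<in> {-1..<0}" using f frac_lt_1[of "t + alpha"] frac_ge_0[of "t + alpha"] by simp
  have "emb (spiral_map t) = cis (2*pi*(frac (t + alpha) + of_int (-1)))" using f mem by (simp add: emb_circle)
  also have "\<dots> = cis (2*pi*(t + alpha))" by (simp only: cis_2pi_add_int cis_2pi_frac)
  also have "\<dots> = cis (2*pi*alpha) * cis (2*pi*t)" by (simp add: cis_mult distrib_left add.commute)
  finally show "emb (spiral_map t) = cis (2*pi*alpha) * emb t" using assms by (simp add: emb_circle)
qed

lemma spiral_map_exp: "spiral_map (exp x) = exp (x + 1)"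
  by (simp add: spiral_map_def exp_add mult.commute)

lemma spiral_map_orbit: "spiral_map (exp (of_int n)) = exp (of_int (n + 1))"
  by (simp add: spiral_map_exp)

lemma orbit_mem: "exp (of_int n) \<in> spiral_space"
  by (simp add: spiral_space_def)

lemma iterate_circle:
  assumes "t \<in> {-1..<0}"
  shows "(spiral_map^^k) t \<in> {-1..<0} \<and> emb ((spiral_map^^k) t) = cis (2*pi*(t + real k * alpha))"
proof (induction k)
  case 0 thus ?case using assms by (simp add: emb_circle)
next
  case (Suc k)
  hence "emb ((spiral_map^^Suc k) t) = cis (2*pi*alpha) * cis (2*pi*(t + real k * alpha))"
    by (simp add: spiral_map_circle)
  also have "\<dots> = cis (2*pi*(t + real (Suc k) * alpha))" by (simp add: cis_mult algebra_simps)
  finally show ?case using Suc spiral_map_circle(1) by simp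
qed

lemma iterate_orbit: "emb ((spiral_map^^k) (exp (of_int n))) = orbit_pt (n + int k)"
proof -
  have "(spiral_map^^k) (exp (of_int n)) = exp (of_int (n + int k))"
    by (induction k) (simp_all add: spiral_map_exp algebra_simps)
  thus ?thesis using emb_orbit[of "n + int k"] by simp
qed

lemma spiral_map_sign: "p \<in> spiral_space \<Longrightarrow> spiral_map p < 0 \<longleftrightarrow> p < 0"
  by (cases rule: spiral_space_cases) (use spiral_map_circle(1) in \<open>auto simp: spiral_map_orbit\<close>)

lemma spiral_map_image: "spiral_map ` spiral_space = spiral_space"
proof
  show "spiral_map ` spiral_space \<subseteq> spiral_space"
  proof
    fix y assume "y \<in> spiral_map ` spiral_space"
    then obtain p where p: "p \<in> spiral_space" "y = spiral_map p" by auto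
    from p(1) show "y \<in> spiral_space"
    proof (cases rule: spiral_space_cases)
      case 1 thus ?thesis using p(2) spiral_map_circle(1) by (auto simp: spiral_space_def)
    next
      case (2 n)
      hence "y = exp (of_int (n + 1))" using p(2) by (simp add: spiral_map_orbit)
      thus ?thesis using orbit_mem[of "n + 1"] by simp
    qed
  qed
  show "spiral_space \<subseteq> spiral_map ` spiral_space"
  proof
    fix t assume "t \<in> spiral_space"
    thus "t \<in> spiral_map ` spiral_space"
    proof (cases rule: spiral_space_cases)
      case 1
      define s where "s = frac (t - alpha) - 1"
      have s: "s \<in> {-1..<0}" using frac_lt_1[of "t - alpha"] frac_ge_0[of "t - alpha"] by (simp add: s_def)
      have "emb (spiral_map s) = cis (2*pi*alpha) * cis (2*pi*(frac (t - alpha) + of_int (-1)))"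
        using s by (simp add: spiral_map_circle emb_circle s_def)
      also have "\<dots> = cis (2*pi*alpha) * cis (2*pi*(t - alpha))" by (simp only: cis_2pi_add_int cis_2pi_frac)
      also have "\<dots> = emb t" using 1 by (simp add: cis_mult algebra_simps emb_circle)
      finally have "spiral_map s = t"
        using inj_on_emb spiral_map_circle(1)[OF s] 1 by (auto simp: inj_on_def spiral_space_def)
      thus ?thesis using s by (auto simp: spiral_space_def)
    next
      case (2 n)
      hence "t = spiral_map (exp (of_int (n - 1)))" by (simp add: spiral_map_exp)
      thus ?thesis using orbit_mem by blast
    qed
  qed
qed

lemma inj_on_spiral_map: "inj_on spiral_map spiral_space"
proof (rule inj_onI)
  fix p q assume p: "p \<in> spiral_space" and q: "q \<in> spiral_space" and e: "spiral_map p = spiral_map q"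
  have same_side: "p < 0 \<longleftrightarrow> q < 0" using spiral_map_sign[OF p] spiral_map_sign[OF q] e by simp
  show "p = q"
  proof (cases "p < 0")
    case True
    hence "p \<in> {-1..<0}" "q \<in> {-1..<0}" using p q same_side by (auto simp: spiral_space_def)
    hence "emb p = emb q" using e spiral_map_circle(2) by (metis cis_neq_zero mult_left_cancel)
    thus ?thesis using inj_on_emb p q by (auto simp: inj_on_def)
  next
    case False
    thus ?thesis using e same_side by (simp add: spiral_map_def)
  qed
qed

definition orbit_defect :: "int \<Rightarrow> real" where
  "orbit_defect n = cmod (orbit_pt (n + 1) - cis (2*pi*alpha) * orbit_pt n)"

lemma orbit_defect_le:
  "orbit_defect n \<le> 4*pi*\<bar>drift (n + 1) - drift n\<bar> + \<bar>offset (n + 1)\<bar> + \<bar>offset n\<bar>"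
proof -
  define c where "c = cis (2*pi*((of_int n + 1) * alpha + drift n))"
  define w where "w = cis (2*pi*(drift (n + 1) - drift n))"
  have "orbit_pt (n + 1) - cis (2*pi*alpha) * orbit_pt n
      = complex_of_real (1 + offset (n + 1)) * c * (w - 1) + complex_of_real (offset (n + 1) - offset n) * c"
    by (simp add: orbit_pt_def c_def w_def cis_mult algebra_simps)
  hence "orbit_defect n \<le> cmod (complex_of_real (1 + offset (n + 1)) * c * (w - 1))
                         + cmod (complex_of_real (offset (n + 1) - offset n) * c)"
    unfolding orbit_defect_def by (metis norm_triangle_ineq)
  also have "\<dots> = \<bar>1 + offset (n + 1)\<bar> * cmod (w - 1) + \<bar>offset (n + 1) - offset n\<bar>"
    by (simp add: norm_mult c_def del: of_real_add of_real_diff)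
  also have "\<bar>1 + offset (n + 1)\<bar> * cmod (w - 1) \<le> 2 * (2*pi*\<bar>drift (n + 1) - drift n\<bar>)"
  proof (rule mult_mono)
    show "\<bar>1 + offset (n + 1)\<bar> \<le> 2"
      using offset_upper[of "n + 1"] power_le_one[of "1/2::real" "nat \<bar>n + 1\<bar>"] by linarith
    show "cmod (w - 1) \<le> 2*pi*\<bar>drift (n + 1) - drift n\<bar>"
      using norm_cis_minus_one_le[of "2*pi*(drift (n + 1) - drift n)"] by (simp add: w_def abs_mult)
  qed auto
  finally show ?thesis by linarith
qed

lemma drift_increment_small:
  assumes "0 < e"
  shows "\<exists>N::nat. \<forall>n. N \<le> nat \<bar>n\<bar> \<longrightarrow> \<bar>drift (n + 1) - drift n\<bar> < e"
proof -
  have "(\<lambda>k::nat. sqrt (real k + 1) - sqrt (real k)) \<longlonglongrightarrow> 0" by real_asymp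
  then obtain N where N: "\<forall>k\<ge>N. \<bar>sqrt (real k + 1) - sqrt (real k)\<bar> < e"
    using LIMSEQ_D[OF _ assms] by fastforce
  have "\<bar>drift (n + 1) - drift n\<bar> < e" if "N \<le> nat \<bar>n\<bar>" for n
  proof (cases "0 \<le> n")
    case True
    hence "\<bar>sqrt (real (nat n) + 1) - sqrt (real (nat n))\<bar> < e" using N[rule_format, of "nat n"] that by simp
    thus ?thesis using True by (simp add: drift_def nat_add_distrib add.commute)
  qed (simp add: drift_def assms)
  thus ?thesis by blast
qed

lemma orbit_defect_small:
  assumes "0 < e"
  shows "\<exists>N::nat. \<forall>n. N \<le> nat \<bar>n\<bar> \<longrightarrow> orbit_defect n < e"
proof -
  obtain N1 where N1: "\<forall>n. N1 \<le> nat \<bar>n\<bar> \<longrightarrow> \<bar>offset n\<bar> < e/4"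
    using offset_small_at_infinity[of "e/4"] assms by auto
  obtain N2 where N2: "\<forall>n. N2 \<le> nat \<bar>n\<bar> \<longrightarrow> \<bar>drift (n + 1) - drift n\<bar> < e/(16*pi)"
    using drift_increment_small[of "e/(16*pi)"] assms by auto
  have "orbit_defect n < e" if n: "N1 + N2 + 1 \<le> nat \<bar>n\<bar>" for n
  proof -
    have "\<bar>offset n\<bar> < e/4" "\<bar>offset (n + 1)\<bar> < e/4" using N1 n by (auto dest!: spec[of _ "n + 1"])
    moreover have "\<bar>drift (n + 1) - drift n\<bar> < e/(16*pi)" using N2 n by simp
    hence "4*pi*\<bar>drift (n + 1) - drift n\<bar> < e/4" using pi_gt_zero by (simp add: field_simps)
    ultimately show ?thesis using orbit_defect_le[of n] by linarith
  qed
  thus ?thesis by blast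
qed

lemma dist_circle_orbit: "t < 0 \<Longrightarrow> \<bar>offset n\<bar> \<le> spiral_dist t (exp (of_int n))"
  using norm_triangle_ineq3[of "emb t" "orbit_pt n"]
  by (simp add: spiral_dist_def dist_norm emb_circle emb_orbit norm_orbit_pt)

lemma dist_orbit_orbit: "\<bar>offset n - offset m\<bar> \<le> spiral_dist (exp (of_int n)) (exp (of_int m))"
  using norm_triangle_ineq3[of "orbit_pt n" "orbit_pt m"]
  by (simp add: spiral_dist_def dist_norm emb_orbit norm_orbit_pt)

lemma index_large_if_offset_small:
  assumes "\<bar>offset n\<bar> < (1/2)^(N + 1)"
  shows "N \<le> nat \<bar>n\<bar>"
proof (rule ccontr)
  assume "\<not> N \<le> nat \<bar>n\<bar>"
  hence "(1/2::real)^(N + 1) \<le> (1/2)^(nat \<bar>n\<bar> + 1)" by (intro power_decreasing) auto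
  thus False using offset_lower[of n] assms by linarith
qed

lemma orbit_point_isolated:
  assumes x: "x \<in> spiral_space" and near: "spiral_dist (exp (of_int n)) x < \<bar>offset n\<bar> / 2"
  shows "x = exp (of_int n)"
  using x
proof (cases rule: spiral_space_cases)
  case 1
  hence "\<bar>offset n\<bar> \<le> spiral_dist (exp (of_int n)) x"
    using dist_circle_orbit[of x n] by (simp add: spiral_dist_def dist_commute)
  thus ?thesis using near offset_nonzero[of n] by simp
next
  case (2 m)
  have "m = n"
  proof (rule ccontr)
    assume "m \<noteq> n"
    thus False using offset_sep[of m n] dist_orbit_orbit[of n m] near 2 by simp
  qed
  thus ?thesis using 2 by simp
qed

(* An orbit point close to a circle point has large index, so it is
   moved almost like the rotation: continuity at the circle. *)
lemma spiral_map_continuous_at_circle: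
  assumes a: "a \<in> {-1..<0}" and e: "0 < e"
  shows "\<exists>\<delta>>0. \<forall>x. x \<in> spiral_space \<and> spiral_dist a x < \<delta> \<longrightarrow> spiral_dist (spiral_map a) (spiral_map x) < e"
proof -
  obtain N where N: "\<forall>n. N \<le> nat \<bar>n\<bar> \<longrightarrow> orbit_defect n < e/2"
    using orbit_defect_small[of "e/2"] e by auto
  define \<delta> where "\<delta> = min (e/2) ((1/2)^(N + 1))"
  have "spiral_dist (spiral_map a) (spiral_map x) < e" if x: "x \<in> spiral_space" and dx: "spiral_dist a x < \<delta>" for x
    using x
  proof (cases rule: spiral_space_cases)
    case 1
    hence "spiral_dist (spiral_map a) (spiral_map x) = cmod (cis (2*pi*alpha) * (emb a - emb x))"
      using a by (simp add: spiral_dist_def dist_norm spiral_map_circle right_diff_distrib)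
    also have "\<dots> = spiral_dist a x" by (simp add: norm_mult spiral_dist_def dist_norm)
    finally show ?thesis using dx e by (simp add: \<delta>_def)
  next
    case (2 n)
    have "\<bar>offset n\<bar> < (1/2)^(N + 1)" using dist_circle_orbit[of a n] a dx 2 by (simp add: \<delta>_def)
    hence "N \<le> nat \<bar>n\<bar>" by (rule index_large_if_offset_small)
    hence defect: "orbit_defect n < e/2" using N by blast
    have "spiral_dist (spiral_map a) (spiral_map x) = cmod (cis (2*pi*alpha) * emb a - orbit_pt (n + 1))"
      using a 2 emb_orbit[of "n + 1"] by (simp add: spiral_dist_def dist_norm spiral_map_circle spiral_map_orbit)
    also have "\<dots> \<le> cmod (cis (2*pi*alpha) * emb a - cis (2*pi*alpha) * orbit_pt n)
                   + cmod (cis (2*pi*alpha) * orbit_pt n - orbit_pt (n + 1))"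
      by (rule norm_diff_triangle_le[where y="cis (2*pi*alpha) * orbit_pt n"]) simp_all
    also have "\<dots> = spiral_dist a x + orbit_defect n"
      using 2 by (simp add: spiral_dist_def dist_norm emb_orbit norm_mult orbit_defect_def
                   norm_minus_commute flip: right_diff_distrib)
    finally show ?thesis using dx defect by (simp add: \<delta>_def)
  qed
  moreover have "0 < \<delta>" using e by (simp add: \<delta>_def)
  ultimately show ?thesis by blast
qed

(* Continuity everywhere: at circle points by the previous lemma, at
   orbit points trivially since they are isolated. *)
lemma spiral_map_continuous:
  "continuous_map (Metric_space.mtopology spiral_space spiral_dist)
                  (Metric_space.mtopology spiral_space spiral_dist) spiral_map"
  unfolding Metric_space.metric_continuous_map[OF spiral_metric spiral_metric]
proof (intro conjI ballI allI impI)
  show "spiral_map ` spiral_space \<subseteq> spiral_space" using spiral_map_image by simp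
  fix a and e :: real assume a: "a \<in> spiral_space" and e: "0 < e"
  show "\<exists>\<delta>>0. \<forall>x. x \<in> spiral_space \<and> spiral_dist a x < \<delta> \<longrightarrow> spiral_dist (spiral_map a) (spiral_map x) < e"
    using a
  proof (cases rule: spiral_space_cases)
    case 1 thus ?thesis using spiral_map_continuous_at_circle e by blast
  next
    case (2 n)
    hence "0 < \<bar>offset n\<bar> / 2" using offset_nonzero by simp
    moreover have "spiral_dist (spiral_map a) (spiral_map x) < e"
      if "x \<in> spiral_space \<and> spiral_dist a x < \<bar>offset n\<bar> / 2" for x
      using orbit_point_isolated[of x n] that 2 e by (simp add: spiral_dist_def)
    ultimately show ?thesis by blast
  qed
qed

(* A continuous bijection of a compact Hausdorff space is a homeomorphism. *)
lemma spiral_map_homeomorphic: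
  "homeomorphic_map (Metric_space.mtopology spiral_space spiral_dist)
                    (Metric_space.mtopology spiral_space spiral_dist) spiral_map"
  by (rule continuous_imp_homeomorphic_map[OF spiral_map_continuous spiral_compact
        Metric_space.Hausdorff_space_mtopology[OF spiral_metric]])
     (simp_all add: Metric_space.topspace_mtopology[OF spiral_metric] spiral_map_image inj_on_spiral_map)

lemma orbit_pair_lower_bound:
  "cmod (cis (2*pi*((of_int k' - of_int k) * alpha)) - 1) - 2*pi*\<bar>drift k' - drift k\<bar>
     - \<bar>offset k\<bar> - \<bar>offset k'\<bar> \<le> cmod (orbit_pt k - orbit_pt k')"
proof -
  define u where "u = cis (2*pi*(of_int k * alpha + drift k))"
  define v where "v = cis (2*pi*(of_int k' * alpha + drift k'))"
  have "u - v = (orbit_pt k - orbit_pt k') - (complex_of_real (offset k) * u - complex_of_real (offset k') * v)"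
    by (simp add: orbit_pt_def u_def v_def algebra_simps)
  hence "cmod (u - v) \<le> cmod (orbit_pt k - orbit_pt k')
                        + cmod (complex_of_real (offset k) * u - complex_of_real (offset k') * v)"
    by (metis norm_triangle_ineq4)
  also have "cmod (complex_of_real (offset k) * u - complex_of_real (offset k') * v) \<le> \<bar>offset k\<bar> + \<bar>offset k'\<bar>"
    using norm_triangle_ineq4[of "complex_of_real (offset k) * u" "complex_of_real (offset k') * v"]
    by (simp add: norm_mult u_def v_def)
  finally have upper: "cmod (u - v) \<le> cmod (orbit_pt k - orbit_pt k') + (\<bar>offset k\<bar> + \<bar>offset k'\<bar>)" by simp
  have "cmod (u - v) = cmod (v - u)" by (rule norm_minus_commute)
  also have "\<dots> = cmod (cis (2*pi*((of_int k' - of_int k) * alpha) + 2*pi*(drift k' - drift k)) - 1)"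
    unfolding u_def v_def norm_cis_diff by (simp add: algebra_simps)
  finally have uv: "cmod (u - v) = cmod (cis (2*pi*((of_int k' - of_int k) * alpha) + 2*pi*(drift k' - drift k)) - 1)" .
  have "cmod (cis (2*pi*((of_int k' - of_int k) * alpha)) - 1) - 2*pi*\<bar>drift k' - drift k\<bar> \<le> cmod (u - v)"
    unfolding uv using norm_cis_shift_ge[of _ "2*pi*(drift k' - drift k)"] by (simp add: abs_mult)
  thus ?thesis using upper by linarith
qed

lemma offset_shift_tendsto: "(\<lambda>n. offset (i + int n)) \<longlonglongrightarrow> 0"
proof (rule LIMSEQ_I)
  fix e :: real assume "0 < e"
  then obtain N where N: "\<forall>n. N \<le> nat \<bar>n\<bar> \<longrightarrow> \<bar>offset n\<bar> < e" using offset_small_at_infinity by blast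
  have "\<bar>offset (i + int n)\<bar> < e" if "N + nat \<bar>i\<bar> \<le> n" for n
  proof -
    have "N \<le> nat \<bar>i + int n\<bar>" using that by arith
    thus ?thesis using N by blast
  qed
  thus "\<exists>no. \<forall>n\<ge>no. norm (offset (i + int n) - 0) < e" by auto
qed

lemma drift_gap_tendsto: "(\<lambda>n. drift (j + int n) - drift (i + int n)) \<longlonglongrightarrow> 0"
proof -
  have "(\<lambda>n::nat. sqrt (real n + of_int j) - sqrt (real n + of_int i)) \<longlonglongrightarrow> 0" by real_asymp
  moreover have "\<forall>\<^sub>F n in sequentially.
      sqrt (real n + of_int j) - sqrt (real n + of_int i) = drift (j + int n) - drift (i + int n)"
    using eventually_ge_at_top[of "nat \<bar>i\<bar> + nat \<bar>j\<bar>"] by eventually_elim (simp add: drift_def add.commute)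
  ultimately show ?thesis by (rule Lim_transform_eventually)
qed

(* Distinct orbit points stay apart: their angular gap tends to the
   constant 2\<pi>(j-i)\<alpha>, which is not a multiple of 2\<pi>. *)
lemma orbit_pairs_distal:
  assumes "i \<noteq> j"
  shows "\<exists>e>0. \<exists>N. \<forall>n\<ge>N. e \<le> cmod (orbit_pt (i + int n) - orbit_pt (j + int n))"
proof -
  define c where "c = cmod (cis (2*pi*(of_int (j - i) * alpha)) - 1)"
  have "cis (2*pi*(of_int (j - i) * alpha)) \<noteq> cis (2*pi*0)"
  proof
    assume "cis (2*pi*(of_int (j - i) * alpha)) = cis (2*pi*0)"
    hence "of_int (j - i) * alpha - 0 \<in> \<int>" by (rule cis_2pi_eq_imp_Ints)
    hence "j - i = 0" unfolding alpha_def by (intro int_mult_sqrt2_Ints) simp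
    thus False using assms by simp
  qed
  hence "0 < c" by (simp add: c_def)
  define lb where "lb n = c - 2*pi*\<bar>drift (j + int n) - drift (i + int n)\<bar>
                           - \<bar>offset (i + int n)\<bar> - \<bar>offset (j + int n)\<bar>" for n
  have "lb \<longlonglongrightarrow> c - 2*pi*0 - 0 - 0"
    unfolding lb_def
    by (intro tendsto_diff tendsto_mult tendsto_const tendsto_rabs_zero drift_gap_tendsto offset_shift_tendsto)
  hence "\<forall>\<^sub>F n in sequentially. c/2 < lb n" using \<open>0 < c\<close> by (intro order_tendstoD(1)) auto
  then obtain N where N: "\<forall>n\<ge>N. c/2 < lb n" by (auto simp: eventually_sequentially)
  have lower: "lb n \<le> cmod (orbit_pt (i + int n) - orbit_pt (j + int n))" for n
  proof -
    have "(of_int (j + int n) - of_int (i + int n) :: real) = of_int (j - i)" by simp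
    thus ?thesis using orbit_pair_lower_bound[of "j + int n" "i + int n"] unfolding lb_def c_def by simp
  qed
  have "\<forall>n\<ge>N. c/2 \<le> cmod (orbit_pt (i + int n) - orbit_pt (j + int n))"
    using N lower by (meson less_imp_le order_trans)
  thus ?thesis using \<open>0 < c\<close> by (intro exI[of _ "c/2"]) auto
qed

lemma orbit_circle_lower_bound:
  assumes "k \<noteq> 0" and "1/4 \<le> frac (drift k - b)" and "frac (drift k - b) \<le> 3/4"
  shows "1/2 \<le> cmod (orbit_pt k - cis (2*pi*(of_int k * alpha + b)))"
proof -
  define u where "u = cis (2*pi*(of_int k * alpha + drift k))"
  define w where "w = cis (2*pi*(of_int k * alpha + b))"
  have "u - w = (orbit_pt k - w) - complex_of_real (offset k) * u" by (simp add: orbit_pt_def u_def algebra_simps)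
  hence "cmod (u - w) \<le> cmod (orbit_pt k - w) + cmod (complex_of_real (offset k) * u)"
    by (metis norm_triangle_ineq4)
  hence "cmod (u - w) \<le> cmod (orbit_pt k - w) + \<bar>offset k\<bar>" by (simp add: norm_mult u_def)
  moreover have "cmod (u - w) = cmod (cis (2*pi*(drift k - b)) - 1)"
    unfolding u_def w_def norm_cis_diff by (simp add: algebra_simps)
  moreover have "1 \<le> cmod (cis (2*pi*(drift k - b)) - 1)" using assms(2,3) by (rule one_le_norm_cis_frac)
  moreover have "\<bar>offset k\<bar> \<le> 1/2" using assms(1) by (rule offset_le_half)
  ultimately show ?thesis by (simp add: w_def)
qed

(* An orbit and a circle orbit are 1/2 apart along a thick set of times,
   where the drift \<surd>(i+n) puts them on opposite sides. *)
lemma orbit_circle_apart_on_thick: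
  "\<exists>T. thick_set T \<and> (\<forall>n\<in>T. 1/2 \<le> cmod (orbit_pt (i + int n) - cis (2*pi*(a + real n * alpha))))"
proof -
  define b where "b = a - of_int i * alpha"
  define T where "T = {n. i + int n \<noteq> 0 \<and> 1/4 \<le> frac (drift (i + int n) - b)
                                          \<and> frac (drift (i + int n) - b) \<le> 3/4}"
  have "1/2 \<le> cmod (orbit_pt (i + int n) - cis (2*pi*(a + real n * alpha)))" if "n \<in> T" for n
  proof -
    have "a + real n * alpha = of_int (i + int n) * alpha + b" by (simp add: b_def algebra_simps)
    thus ?thesis using orbit_circle_lower_bound[of "i + int n" b] that by (simp add: T_def)
  qed
  moreover have "thick_set T" unfolding thick_set_def
  proof
    fix L
    obtain K where K: "nat \<bar>i\<bar> + 1 \<le> K"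
      and band: "\<forall>k\<in>{K..<K+L}. 1/4 \<le> frac (sqrt (real k) - b) \<and> frac (sqrt (real k) - b) \<le> 3/4"
      using sqrt_runs_in_band[of "nat \<bar>i\<bar> + 1" L b] by blast
    have "n \<in> T" if n: "n \<in> {nat (int K - i)..<nat (int K - i) + L}" for n
    proof -
      define k where "k = nat (i + int n)"
      have "i + int n = int k" "k \<in> {K..<K+L}" using n K by (auto simp: k_def)
      thus ?thesis using band K by (auto simp: T_def drift_def)
    qed
    thus "\<exists>s. {s..<s + L} \<subseteq> T" by blast
  qed
  ultimately show ?thesis by blast
qed

lemma circle_rotation_isometric:
  assumes p: "p \<in> {-1..<0}" and q: "q \<in> {-1..<0}"
  shows "spiral_dist ((spiral_map^^n) p) ((spiral_map^^n) q) = spiral_dist p q"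
proof -
  have "cis (2*pi*(p + real n * alpha)) - cis (2*pi*(q + real n * alpha))
      = cis (2*pi*(real n * alpha)) * (cis (2*pi*p) - cis (2*pi*q))"
    by (simp add: cis_mult algebra_simps)
  thus ?thesis using p q by (simp add: spiral_dist_def dist_norm iterate_circle norm_mult emb_circle)
qed

lemma circle_orbit_apart:
  assumes "p \<in> {-1..<0}"
  shows "\<exists>T. thick_set T \<and>
           (\<forall>n\<in>T. 1/2 \<le> spiral_dist ((spiral_map^^n) p) ((spiral_map^^n) (exp (of_int j))))"
proof -
  obtain T where T: "thick_set T"
    "\<forall>n\<in>T. 1/2 \<le> cmod (orbit_pt (j + int n) - cis (2*pi*(p + real n * alpha)))"
    using orbit_circle_apart_on_thick by blast
  have "spiral_dist ((spiral_map^^n) p) ((spiral_map^^n) (exp (of_int j)))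
      = cmod (orbit_pt (j + int n) - cis (2*pi*(p + real n * alpha)))" for n
    using assms by (simp add: spiral_dist_def dist_norm iterate_circle iterate_orbit norm_minus_commute)
  thus ?thesis using T by auto
qed

lemma spiral_pairs_apart:
  assumes p: "p \<in> spiral_space" and q: "q \<in> spiral_space" and "p \<noteq> q"
  shows "\<exists>e>0. \<exists>T. thick_set T \<and>
           (\<forall>n\<in>T. e \<le> spiral_dist ((spiral_map^^n) p) ((spiral_map^^n) q))"
proof -
  have comm: "spiral_dist x y = spiral_dist y x" for x y by (simp add: spiral_dist_def dist_commute)
  from p show ?thesis
  proof (cases rule: spiral_space_cases)
    case pc: 1
    from q show ?thesis
    proof (cases rule: spiral_space_cases)
      case 1
      have "0 < spiral_dist p q" using Metric_space.mdist_pos_less[OF spiral_metric] assms by blast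
      thus ?thesis using circle_rotation_isometric[OF pc 1] thick_atLeast[of 0] by fastforce
    next
      case (2 j)
      thus ?thesis using circle_orbit_apart[OF pc, of j] by (intro exI[of _ "1/2"]) auto
    qed
  next
    case (2 i)
    from q show ?thesis
    proof (cases rule: spiral_space_cases)
      case 1
      thus ?thesis using circle_orbit_apart[OF 1, of i] 2 comm by (intro exI[of _ "1/2"]) auto
    next
      case qj: (2 j)
      hence "i \<noteq> j" using 2 assms(3) by auto
      then obtain e N where "0 < e" "\<forall>n\<ge>N. e \<le> cmod (orbit_pt (i + int n) - orbit_pt (j + int n))"
        using orbit_pairs_distal by blast
      thus ?thesis using 2 qj thick_atLeast[of N]
        by (intro exI[of _ e]) (auto simp: spiral_dist_def dist_norm iterate_orbit)
    qed
  qed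
qed

lemma spiral_SProx: "SProx spiral_space spiral_dist spiral_map = diag_on spiral_space"
  using spiral_metric spiral_map_image spiral_pairs_apart by (intro SProx_eq_diag_onI) auto

(* The orbit point x_0 and the circle point 1 (coded by 1 and -1) are
   proximal: at time k\<^sup>2 the drift \<surd>(k\<^sup>2) = k is an integer, so the phases
   agree and only the radial offset of x_{k\<^sup>2} separates them. *)
lemma spiral_proximal_pair: "(1, -1) \<in> Prox spiral_space spiral_dist spiral_map"
proof (rule ProxI_subseq[OF spiral_metric])
  show "(1::real) \<in> spiral_space" using orbit_mem[of 0] by simp
  show "(-1::real) \<in> spiral_space" by (simp add: spiral_space_def)
  show "strict_mono (\<lambda>k::nat. k\<^sup>2)" by (simp add: strict_mono_def power_strict_mono)
  have "spiral_dist ((spiral_map^^(k\<^sup>2)) 1) ((spiral_map^^(k\<^sup>2)) (-1)) = (1/2)^(k\<^sup>2)" for k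
  proof -
    have "drift (int (k\<^sup>2)) = real k" by (simp add: drift_def)
    moreover have "cis (2*pi*(real (k\<^sup>2) * alpha + real k)) = cis (2*pi*(real (k\<^sup>2) * alpha))"
      using cis_2pi_add_int[of _ "int k"] by simp
    ultimately have "orbit_pt (int (k\<^sup>2)) = complex_of_real (1 + offset (int (k\<^sup>2))) * cis (2*pi*(real (k\<^sup>2) * alpha))"
      by (simp add: orbit_pt_def)
    moreover have "cis (2*pi*(-1 + real (k\<^sup>2) * alpha)) = cis (2*pi*(real (k\<^sup>2) * alpha))"
      using cis_2pi_add_int[of "real (k\<^sup>2) * alpha" "-1"] by (simp add: add.commute)
    ultimately have "spiral_dist ((spiral_map^^(k\<^sup>2)) 1) ((spiral_map^^(k\<^sup>2)) (-1)) = \<bar>offset (int (k\<^sup>2))\<bar>"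
      using iterate_orbit[of "k\<^sup>2" 0] iterate_circle[of "-1" "k\<^sup>2"]
      by (simp add: spiral_dist_def dist_norm norm_mult algebra_simps)
    moreover have "offset (int m) = (1/2)^m" for m by (simp add: offset_def)
    ultimately show ?thesis by (metis abs_of_nonneg zero_le_divide_1_iff zero_le_numeral zero_le_power)
  qed
  moreover have "(\<lambda>k::nat. (1/2::real)^(k\<^sup>2)) \<longlonglongrightarrow> 0" by real_asymp
  ultimately show "(\<lambda>k. spiral_dist ((spiral_map^^(k\<^sup>2)) 1) ((spiral_map^^(k\<^sup>2)) (-1))) \<longlonglongrightarrow> 0"
    by simp
qed

theorem mainTheorem13:
  shows "\<exists>(X :: real set) (d :: real \<Rightarrow> real \<Rightarrow> real) (f :: real \<Rightarrow> real).
    Metric_space X d \<and>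
    compact_space (Metric_space.mtopology X d) \<and>
    homeomorphic_map (Metric_space.mtopology X d) (Metric_space.mtopology X d) f \<and>
    SProx X d f = diag_on X \<and>
    Prox X d f \<noteq> diag_on X"
proof (intro exI conjI)
  show "Prox spiral_space spiral_dist spiral_map \<noteq> diag_on spiral_space"
    using spiral_proximal_pair by (auto simp: diag_on_def)
qed (fact spiral_metric spiral_compact spiral_map_homeomorphic spiral_SProx)+

end
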